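(* Let $A_n=1$ if $n=2^{k+1}-2$ for some integer $k\ge0$ and $A_n=0$ otherwise, and let $D(n)=\det\left(A_{i+j}\right)_{i,j=0}^{n-1}$ for $n\ge1$, $D(0)=1$. Then for all $n\ge 0$, $$D(2n)=(-1)^{\binom{n}{2}}D(n),\qquad D(2n+1)=(-1)^{\binom{n+1}{2}}D(n).$$ *)

theory Defs
  imports Main "Jordan_Normal_Form.Determinant"
begin

definition A :: "nat \<Rightarrow> int" where
  "A n = (if \<exists>k::nat. n = 2 ^ (k + 1) - 2 then 1 else 0)"

definition D :: "nat \<Rightarrow> int" where
  "D n = (if n = 0 then 1 else det (mat n n (\<lambda>(i, j). A (i + j))))"

end

theory Submission
  imports Defs
begin

(* Sorting the indices by parity, even ones first, turns the Hankel matrix (A (i + j)) into a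
   2 x 2 block matrix.  Since A vanishes at odd arguments and A (2 m + 2) = A m, its off-diagonal
   blocks vanish and
     H (N) = E (ceil (N / 2)) * H (floor (N / 2)),
   where H (m) and E (m) are the m x m Hankel determinants of s |-> A s and s |-> A (2 s).
   Reordering E in the same way leaves a zero lower-right block, because A (2 s) vanishes at all
   even s > 0; together with A (4 s + 2) = A (2 s) and A (4 s + 6) = A s this gives
     E (2 k) = (-1)^k E (k)^2  and  E (2 k + 1) = (-1)^k H (k)^2.
   By induction all E (m) and H (m) are +1 or -1, hence E (m) = (-1)^(m div 2) = (-1)^(m choose 2),
   and the factorization of H = D yields both recursions. *)

lemma neg_one_power_parity_cong:
  assumes "even m \<longleftrightarrow> even n"
  shows "(-1 :: 'a :: ring_1) ^ m = (-1) ^ n"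
  using assms by (cases "even n") (simp_all add: neg_one_even_power neg_one_odd_power)

lemma neg_one_power_choose_two: "(-1 :: 'a :: ring_1) ^ (n choose 2) = (-1) ^ (n div 2)"
proof -
  have "even (n choose 2) \<longleftrightarrow> even (n div 2)"
  proof (cases "even n")
    case True
    then obtain k where "n = 2 * k" by blast
    then show ?thesis by (auto simp: choose_two)
  next
    case False
    then obtain k where "n = 2 * k + 1" using oddE by blast
    then show ?thesis by (auto simp: choose_two)
  qed
  then show ?thesis
    by (rule neg_one_power_parity_cong)
qed

lemma det_mat_permute_rows_cols:
  fixes f :: "nat \<Rightarrow> nat \<Rightarrow> 'a :: comm_ring_1"
  assumes p: "p permutes {0..<n}"
  shows "det (mat n n (\<lambda>(i, j). f (p i) (p j))) = det (mat n n (\<lambda>(i, j). f i j))"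
proof -
  have p_lt: "i < n \<Longrightarrow> p i < n" for i
    using permutes_in_image[OF p] by simp
  define B where "B = mat n n (\<lambda>(i, j). f i (p j))"
  define C where "C = mat n n (\<lambda>(i, j). f j i)"
  have B: "B \<in> carrier_mat n n" and C: "C \<in> carrier_mat n n"
    by (simp_all add: B_def C_def)
  have "mat n n (\<lambda>(i, j). f (p i) (p j)) = mat n n (\<lambda>(i, j). B $$ (p i, j))"
    by (rule eq_matI) (auto simp: B_def p_lt)
  then have rows: "det (mat n n (\<lambda>(i, j). f (p i) (p j))) = signof p * det B"
    using det_permute_rows[OF B p] by simp
  have "det B = det B\<^sup>T"
    using det_transpose[OF B] by simp
  also have "B\<^sup>T = mat n n (\<lambda>(i, j). C $$ (p i, j))"
    by (rule eq_matI) (auto simp: B_def C_def p_lt)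
  also have "det \<dots> = signof p * det C"
    by (rule det_permute_rows[OF C p])
  also have "det C = det C\<^sup>T"
    using det_transpose[OF C] by simp
  also have "C\<^sup>T = mat n n (\<lambda>(i, j). f i j)"
    by (rule eq_matI) (auto simp: C_def)
  finally have cols: "det B = signof p * det (mat n n (\<lambda>(i, j). f i j))" .
  have "(signof p :: 'a) * signof p = 1"
    by (simp add: sign_def)
  then show ?thesis
    unfolding rows cols by (simp add: mult.assoc[symmetric])
qed

lemma det_block_lower_left_zero:
  fixes M :: "'a :: idom mat"
  assumes M: "M \<in> carrier_mat (a + b) (a + b)"
    and zero: "\<And>i j. a \<le> i \<Longrightarrow> i < a + b \<Longrightarrow> j < a \<Longrightarrow> M $$ (i, j) = 0"
  shows "det M = det (mat a a (\<lambda>(i, j). M $$ (i, j))) * det (mat b b (\<lambda>(i, j). M $$ (i + a, j + a)))"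
proof -
  have "M = four_block_mat (mat a a (\<lambda>(i, j). M $$ (i, j))) (mat a b (\<lambda>(i, j). M $$ (i, j + a)))
      (0\<^sub>m b a) (mat b b (\<lambda>(i, j). M $$ (i + a, j + a)))"
    using M by (intro eq_matI) (auto simp: zero)
  also have "det \<dots> = det (mat a a (\<lambda>(i, j). M $$ (i, j))) * det (mat b b (\<lambda>(i, j). M $$ (i + a, j + a)))"
    by (rule det_four_block_mat_lower_left_zero) auto
  finally show ?thesis .
qed

lemma det_four_block_mat_lower_right_zero:
  fixes X Y Z :: "'a :: idom mat"
  assumes X: "X \<in> carrier_mat k k" and Y: "Y \<in> carrier_mat k k" and Z: "Z \<in> carrier_mat k k"
  shows "det (four_block_mat X Y Z (0\<^sub>m k k)) = (-1) ^ k * det Y * det Z"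
proof -
  have "det (four_block_mat X Y Z (0\<^sub>m k k)) = det (X * 0\<^sub>m k k - Y * Z)"
    using X Y Z by (intro det_four_block_mat) auto
  also have "X * 0\<^sub>m k k - Y * Z = (-1) \<cdot>\<^sub>m (Y * Z)"
    using X Y Z by (intro eq_matI) auto
  also have "det \<dots> = (-1) ^ k * (det Y * det Z)"
    using X Y Z by (simp add: det_mult[OF Y Z])
  finally show ?thesis by simp
qed

lemma det_four_block_mat_bordered_lower_right_zero:
  fixes X Y Z :: "'a :: idom mat"
  assumes X: "X \<in> carrier_mat (Suc k) (Suc k)" and Y: "Y \<in> carrier_mat (Suc k) k"
    and Z: "Z \<in> carrier_mat k (Suc k)"
    and X_zero: "\<And>i j. i < Suc k \<Longrightarrow> j < Suc k \<Longrightarrow> (i, j) \<noteq> (0, 0) \<Longrightarrow> X $$ (i, j) = 0"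
  shows "det (four_block_mat X Y Z (0\<^sub>m k k)) = (-1) ^ k * X $$ (0, 0)
    * det (mat k k (\<lambda>(i, j). Y $$ (Suc i, j))) * det (mat k k (\<lambda>(i, j). Z $$ (i, Suc j)))"
proof -
  define M where "M = four_block_mat X Y Z (0\<^sub>m k k)"
  have M: "M \<in> carrier_mat (1 + k + k) (1 + k + k)"
    using four_block_carrier_mat[OF X zero_carrier_mat[of k k]] by (simp add: M_def)
  txt \<open>Move the rows of Z up, directly below the first row; the top-left block of the result
    has first row (X$$(0,0), 0, ..., 0), the bottom-right block consists of the rows of Y below its
    first one, and the block below the top-left block is zero.\<close>
  define R where "R = mat (Suc k + k) (Suc k + k)
    (\<lambda>(i, j). M $$ (if i < 1 then i else if i < 1 + k then i + k else i - k, j))"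
  define T where "T = mat (Suc k) (Suc k) (\<lambda>(i, j). R $$ (i, j))"
  have "det M = (-1) ^ (k * k) * det R"
    unfolding R_def using det_swap_final_rows[OF M, of 1 k k] by simp
  also have "det R = det T * det (mat k k (\<lambda>(i, j). R $$ (i + Suc k, j + Suc k)))"
    unfolding T_def
  proof (rule det_block_lower_left_zero)
    fix i j assume "Suc k \<le> i" "i < Suc k + k" "j < Suc k"
    then show "R $$ (i, j) = 0"
      using X Y Z by (simp add: R_def M_def X_zero)
  qed (simp add: R_def)
  also have "mat k k (\<lambda>(i, j). R $$ (i + Suc k, j + Suc k)) = mat k k (\<lambda>(i, j). Y $$ (Suc i, j))"
    using X Y Z by (intro eq_matI) (auto simp: R_def M_def)
  also have "det T = det T\<^sup>T"
    using det_transpose[of T "Suc k"] by (simp add: T_def)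
  also have "\<dots> = det (mat 1 1 (\<lambda>(i, j). T\<^sup>T $$ (i, j))) * det (mat k k (\<lambda>(i, j). T\<^sup>T $$ (i + 1, j + 1)))"
  proof (rule det_block_lower_left_zero)
    fix i j :: nat assume "1 \<le> i" "i < 1 + k" "j < 1"
    then show "T\<^sup>T $$ (i, j) = 0"
      using X Y Z by (simp add: T_def R_def M_def X_zero)
  qed (simp add: T_def)
  also have "det (mat 1 1 (\<lambda>(i, j). T\<^sup>T $$ (i, j))) = X $$ (0, 0)"
    using X Y Z by (subst det_single) (auto simp: T_def R_def M_def)
  also have "mat k k (\<lambda>(i, j). T\<^sup>T $$ (i + 1, j + 1)) = (mat k k (\<lambda>(i, j). Z $$ (i, Suc j)))\<^sup>T"
    using X Y Z by (intro eq_matI) (auto simp: T_def R_def M_def)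
  also have "det \<dots> = det (mat k k (\<lambda>(i, j). Z $$ (i, Suc j)))"
    by (rule det_transpose[of _ k]) simp
  also have "(-1 :: 'a) ^ (k * k) = (-1) ^ k"
    by (rule neg_one_power_parity_cong) simp
  finally show ?thesis
    by (simp add: M_def mult_ac)
qed

definition hankel_mat :: "nat \<Rightarrow> (nat \<Rightarrow> 'a) \<Rightarrow> 'a mat" where
  "hankel_mat n a = mat n n (\<lambda>(i, j). a (i + j))"

lemma hankel_mat_carrier [simp]: "hankel_mat n a \<in> carrier_mat n n"
  by (simp add: hankel_mat_def)

lemma det_hankel_mat_0: "det (hankel_mat 0 a) = 1"
proof -
  have "hankel_mat 0 a = 1\<^sub>m 0"
    by (rule eq_matI) (simp_all add: hankel_mat_def)
  then show ?thesis by simp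
qed

definition evens_then_odds :: "nat \<Rightarrow> nat \<Rightarrow> nat" where
  "evens_then_odds n t =
     (if t < (n + 1) div 2 then 2 * t else if t < n then 2 * (t - (n + 1) div 2) + 1 else t)"

lemma evens_then_odds_permutes: "evens_then_odds n permutes {0..<n}"
proof (rule bij_imp_permutes)
  let ?e = "(n + 1) div 2"
  show "bij_betw (evens_then_odds n) {0..<n} {0..<n}"
  proof (rule bij_betw_imageI)
    show "inj_on (evens_then_odds n) {0..<n}"
      by (rule inj_onI) (auto simp: evens_then_odds_def split: if_splits; presburger)
    show "evens_then_odds n ` {0..<n} = {0..<n}"
    proof
      show "evens_then_odds n ` {0..<n} \<subseteq> {0..<n}"
        by (auto simp: evens_then_odds_def)
      show "{0..<n} \<subseteq> evens_then_odds n ` {0..<n}"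
      proof
        fix x assume x: "x \<in> {0..<n}"
        have "x = evens_then_odds n (if even x then x div 2 else ?e + x div 2)"
          and "(if even x then x div 2 else ?e + x div 2) \<in> {0..<n}"
          using x by (auto simp: evens_then_odds_def; presburger)+
        then show "x \<in> evens_then_odds n ` {0..<n}" by blast
      qed
    qed
  qed
qed (simp add: evens_then_odds_def)

lemma det_hankel_mat_parity_blocks:
  fixes a :: "nat \<Rightarrow> 'a :: comm_ring_1"
  shows "det (hankel_mat n a) = det (four_block_mat
     (hankel_mat ((n + 1) div 2) (\<lambda>s. a (2 * s)))
     (mat ((n + 1) div 2) (n div 2) (\<lambda>(i, j). a (2 * (i + j) + 1)))
     (mat (n div 2) ((n + 1) div 2) (\<lambda>(i, j). a (2 * (i + j) + 1)))
     (hankel_mat (n div 2) (\<lambda>s. a (2 * s + 2))))"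
proof -
  let ?p = "evens_then_odds n"
  have "det (hankel_mat n a) = det (mat n n (\<lambda>(i, j). a (?p i + ?p j)))"
    unfolding hankel_mat_def
    by (rule det_mat_permute_rows_cols[OF evens_then_odds_permutes, symmetric])
  also have "mat n n (\<lambda>(i, j). a (?p i + ?p j)) = four_block_mat
     (hankel_mat ((n + 1) div 2) (\<lambda>s. a (2 * s)))
     (mat ((n + 1) div 2) (n div 2) (\<lambda>(i, j). a (2 * (i + j) + 1)))
     (mat (n div 2) ((n + 1) div 2) (\<lambda>(i, j). a (2 * (i + j) + 1)))
     (hankel_mat (n div 2) (\<lambda>s. a (2 * s + 2)))"
    by (intro eq_matI) (auto simp: hankel_mat_def evens_then_odds_def intro!: arg_cong[where f = a])
  finally show ?thesis .
qed

lemma det_hankel_mat_odd_vanishing: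
  fixes a :: "nat \<Rightarrow> 'a :: idom"
  assumes odd_zero: "\<And>s. odd s \<Longrightarrow> a s = 0"
  shows "det (hankel_mat n a) =
    det (hankel_mat ((n + 1) div 2) (\<lambda>s. a (2 * s))) * det (hankel_mat (n div 2) (\<lambda>s. a (2 * s + 2)))"
  by (subst det_hankel_mat_parity_blocks, rule det_four_block_mat_lower_left_zero) (auto simp: odd_zero)

lemma det_hankel_mat_even_size:
  fixes a :: "nat \<Rightarrow> 'a :: idom"
  assumes "\<And>s. a (2 * s + 2) = 0"
  shows "det (hankel_mat (2 * k) a) = (-1) ^ k * det (hankel_mat k (\<lambda>s. a (2 * s + 1))) ^ 2"
proof -
  have "mat k k (\<lambda>(i, j). a (2 * (i + j) + 1)) = hankel_mat k (\<lambda>s. a (2 * s + 1))"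
    by (simp add: hankel_mat_def)
  moreover have "hankel_mat k (\<lambda>s. a (2 * s + 2)) = 0\<^sub>m k k"
    by (intro eq_matI) (auto simp: hankel_mat_def assms[of "_ + _", simplified])
  ultimately show ?thesis
    apply (subst det_hankel_mat_parity_blocks)
    by (simp add: det_four_block_mat_lower_right_zero power2_eq_square)
qed

lemma det_hankel_mat_odd_size:
  fixes a :: "nat \<Rightarrow> 'a :: idom"
  assumes even_zero: "\<And>s. a (2 * s + 2) = 0"
  shows "det (hankel_mat (2 * k + 1) a) = (-1) ^ k * a 0 * det (hankel_mat k (\<lambda>s. a (2 * s + 3))) ^ 2"
proof -
  have X_zero: "hankel_mat (Suc k) (\<lambda>s. a (2 * s)) $$ (i, j) = 0"
    if "i < Suc k" "j < Suc k" "(i, j) \<noteq> (0, 0)" for i j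
  proof -
    have "2 * (i + j) = 2 * (i + j - 1) + 2" using that by auto
    then show ?thesis using that even_zero[of "i + j - 1"] by (simp add: hankel_mat_def)
  qed
  have Y: "mat k k (\<lambda>(i, j). mat (Suc k) k (\<lambda>(i, j). a (2 * (i + j) + 1)) $$ (Suc i, j))
      = hankel_mat k (\<lambda>s. a (2 * s + 3))"
    by (intro eq_matI) (auto simp: hankel_mat_def intro!: arg_cong[where f = a])
  have Z: "mat k k (\<lambda>(i, j). mat k (Suc k) (\<lambda>(i, j). a (2 * (i + j) + 1)) $$ (i, Suc j))
      = hankel_mat k (\<lambda>s. a (2 * s + 3))"
    by (intro eq_matI) (auto simp: hankel_mat_def intro!: arg_cong[where f = a])
  have "hankel_mat k (\<lambda>s. a (2 * s + 2)) = 0\<^sub>m k k"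
    by (intro eq_matI) (auto simp: hankel_mat_def even_zero[of "_ + _", simplified])
  then have "det (hankel_mat (2 * k + 1) a) = det (four_block_mat (hankel_mat (Suc k) (\<lambda>s. a (2 * s)))
      (mat (Suc k) k (\<lambda>(i, j). a (2 * (i + j) + 1))) (mat k (Suc k) (\<lambda>(i, j). a (2 * (i + j) + 1)))
      (0\<^sub>m k k))"
    using det_hankel_mat_parity_blocks[of "2 * k + 1" a] by simp
  also have "\<dots> = (-1) ^ k * hankel_mat (Suc k) (\<lambda>s. a (2 * s)) $$ (0, 0)
      * det (mat k k (\<lambda>(i, j). mat (Suc k) k (\<lambda>(i, j). a (2 * (i + j) + 1)) $$ (Suc i, j)))
      * det (mat k k (\<lambda>(i, j). mat k (Suc k) (\<lambda>(i, j). a (2 * (i + j) + 1)) $$ (i, Suc j)))"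
    by (rule det_four_block_mat_bordered_lower_right_zero) (auto simp: X_zero)
  finally show ?thesis
    unfolding Y Z by (simp add: hankel_mat_def power2_eq_square)
qed

lemma A_eq_power_of_two: "A n = (if \<exists>k. n + 2 = 2 ^ Suc k then 1 else 0)"
proof -
  have "n = 2 ^ Suc k - 2 \<longleftrightarrow> n + 2 = 2 ^ Suc k" for k :: nat
  proof -
    have "(2 :: nat) \<le> 2 ^ Suc k"
      using power_increasing[of 1 "Suc k" "2 :: nat"] by simp
    then show ?thesis by linarith
  qed
  then show ?thesis
    by (simp add: A_def)
qed

lemma A_0: "A 0 = 1"
  by (auto simp: A_def intro: exI[of _ 0])

lemma A_odd: "odd n \<Longrightarrow> A n = 0"
  by (auto simp: A_eq_power_of_two dest: arg_cong[where f = even])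

lemma A_double_plus_two: "A (2 * n + 2) = A n"
proof -
  have "(\<exists>k. 2 * n + 2 + 2 = 2 ^ Suc k) \<longleftrightarrow> (\<exists>k. n + 2 = 2 ^ Suc k)"
  proof
    assume "\<exists>k. 2 * n + 2 + 2 = 2 ^ Suc k"
    then obtain k where "2 * (n + 2) = 2 * 2 ^ k" by auto
    then have "n + 2 = 2 ^ k" by simp
    moreover from this have "k \<noteq> 0" by (intro notI) simp
    ultimately show "\<exists>k. n + 2 = 2 ^ Suc k" by (metis not0_implies_Suc)
  next
    assume "\<exists>k. n + 2 = 2 ^ Suc k"
    then obtain k where "n + 2 = 2 ^ Suc k" ..
    then have "2 * n + 2 + 2 = 2 ^ Suc (Suc k)" by simp
    then show "\<exists>k. 2 * n + 2 + 2 = 2 ^ Suc k" ..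
  qed
  then show ?thesis
    by (simp only: A_eq_power_of_two)
qed

lemma A_double_double_plus_two: "A (2 * (2 * s + 2)) = 0"
proof -
  have "A (2 * (2 * s + 2)) = A (2 * (2 * s + 1) + 2)"
    by (rule arg_cong[where f = A]) simp
  also have "\<dots> = A (2 * s + 1)"
    by (rule A_double_plus_two)
  finally show ?thesis
    by (simp add: A_odd)
qed

lemma det_hankel_mat_A_factor: "det (hankel_mat n A) =
    det (hankel_mat ((n + 1) div 2) (\<lambda>s. A (2 * s))) * det (hankel_mat (n div 2) A)"
proof -
  have "(\<lambda>s. A (2 * s + 2)) = A"
    by (rule ext) (rule A_double_plus_two)
  then show ?thesis
    using det_hankel_mat_odd_vanishing[of A n, OF A_odd] by simp
qed

lemma det_hankel_mat_A_even_terms_even_size: "det (hankel_mat (2 * k) (\<lambda>s. A (2 * s))) =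
    (-1) ^ k * det (hankel_mat k (\<lambda>s. A (2 * s))) ^ 2"
proof -
  have "(\<lambda>s. A (2 * (2 * s + 1))) = (\<lambda>s. A (2 * s))"
  proof
    fix s
    have "A (2 * (2 * s + 1)) = A (2 * (2 * s) + 2)"
      by (rule arg_cong[where f = A]) simp
    then show "A (2 * (2 * s + 1)) = A (2 * s)"
      by (simp only: A_double_plus_two)
  qed
  then show ?thesis
    using det_hankel_mat_even_size[of "\<lambda>s. A (2 * s)" k, OF A_double_double_plus_two] by simp
qed

lemma det_hankel_mat_A_even_terms_odd_size: "det (hankel_mat (2 * k + 1) (\<lambda>s. A (2 * s))) =
    (-1) ^ k * det (hankel_mat k A) ^ 2"
proof -
  have "(\<lambda>s. A (2 * (2 * s + 3))) = A"
  proof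
    fix s
    have "A (2 * (2 * s + 3)) = A (2 * (2 * s + 2) + 2)"
      by (rule arg_cong[where f = A]) simp
    also have "\<dots> = A s"
      by (simp only: A_double_plus_two)
    finally show "A (2 * (2 * s + 3)) = A s" .
  qed
  then show ?thesis
    using det_hankel_mat_odd_size[of "\<lambda>s. A (2 * s)" k, OF A_double_double_plus_two] by (simp add: A_0)
qed

lemma det_hankel_mat_A_squares:
  "det (hankel_mat n (\<lambda>s. A (2 * s))) ^ 2 = 1 \<and> det (hankel_mat n A) ^ 2 = 1"
proof (induction n rule: less_induct)
  case (less n)
  show ?case
  proof (cases "n = 0")
    case True
    then show ?thesis by (simp add: det_hankel_mat_0)
  next
    case False
    have even_terms: "det (hankel_mat n (\<lambda>s. A (2 * s))) ^ 2 = 1"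
    proof (cases "even n")
      case True
      then obtain k where n: "n = 2 * k" by blast
      with False have "det (hankel_mat k (\<lambda>s. A (2 * s))) ^ 2 = 1"
        using less.IH by simp
      then show ?thesis
        unfolding n det_hankel_mat_A_even_terms_even_size by (simp add: power_mult_distrib flip: power_mult)
    next
      case False
      then obtain k where n: "n = 2 * k + 1" using oddE by blast
      then have "det (hankel_mat k A) ^ 2 = 1"
        using less.IH by simp
      then show ?thesis
        unfolding n det_hankel_mat_A_even_terms_odd_size by (simp add: power_mult_distrib flip: power_mult)
    qed
    have "det (hankel_mat ((n + 1) div 2) (\<lambda>s. A (2 * s))) ^ 2 = 1"
      using even_terms less.IH[of "(n + 1) div 2"] False by (cases "n = 1") auto
    moreover have "det (hankel_mat (n div 2) A) ^ 2 = 1"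
      using less.IH False by simp
    ultimately show ?thesis
      using even_terms unfolding det_hankel_mat_A_factor[of n] by (simp add: power_mult_distrib)
  qed
qed

lemma det_hankel_mat_A_even_terms: "det (hankel_mat n (\<lambda>s. A (2 * s))) = (-1) ^ (n choose 2)"
proof (cases "even n")
  case True
  then obtain k where n: "n = 2 * k" by blast
  then show ?thesis
    using det_hankel_mat_A_squares[of k]
    unfolding n det_hankel_mat_A_even_terms_even_size neg_one_power_choose_two by simp
next
  case False
  then obtain k where n: "n = 2 * k + 1" using oddE by blast
  then show ?thesis
    using det_hankel_mat_A_squares[of k]
    unfolding n det_hankel_mat_A_even_terms_odd_size neg_one_power_choose_two by simp
qed

lemma D_eq_det_hankel_mat: "D n = det (hankel_mat n A)"
  by (simp add: D_def hankel_mat_def)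

theorem theorem2p5:
  fixes n :: nat
  shows "D (2 * n) = (-1) ^ (n choose 2) * D n
     \<and> D (2 * n + 1) = (-1) ^ ((n + 1) choose 2) * D n"
proof
  have "D (2 * n) = det (hankel_mat n (\<lambda>s. A (2 * s))) * D n"
    using det_hankel_mat_A_factor[of "2 * n"] by (simp only: D_eq_det_hankel_mat) simp
  then show "D (2 * n) = (-1) ^ (n choose 2) * D n"
    by (simp only: det_hankel_mat_A_even_terms)
  have "D (2 * n + 1) = det (hankel_mat (n + 1) (\<lambda>s. A (2 * s))) * D n"
    using det_hankel_mat_A_factor[of "2 * n + 1"] by (simp only: D_eq_det_hankel_mat) simp
  then show "D (2 * n + 1) = (-1) ^ ((n + 1) choose 2) * D n"
    by (simp only: det_hankel_mat_A_even_terms)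
qed

end
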